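(* Let $f:F\to F'$ be a morphism of hyperfields. Let $F_1,F_2$ be topological hyperfields whose underlying hyperfield is $F$, such that for each $a\in F'$ the identity map $F_1\to F_2$ restricts to a homeomorphism $f^{-1}(a)\to f^{-1}(a)$, each preimage carrying its subspace topology. Let $*\in\{s,w\}$ and $M\in\operatorname{Gr}^*(r,F'^n)$. Then the identity map $\operatorname{Real}^*_{F_1}(M)\to\operatorname{Real}^*_{F_2}(M)$ is a homeomorphism.
   Context: Hyperfields. A hyperfield $(F,\odot,\boxplus,1,0)$ has the following data and axioms. - $\odot$ is a commutative multiplication and $\boxplus$ is a hyperaddition assigning to each $x,y$ a nonempty subset $x\boxplus y\subseteq F$ (extended to subsets by unions). - $\boxplus$ is commutative and associative, and $x\boxplus 0=\{x\}$. - Each $x$ has a unique $-x$ with $0\in x\boxplus(-x)$, and $x\in y\boxplus z \iff z\in x\boxplus(-y)$. - $(F\setminus\{0\},\odot,1)$ is an abelian group $F^\times$, $0\odot x=0$, and $x\odot(y\boxplus z)=(x\odot y)\boxplus(x\odot z)$. A homomorphism (morphism) $h$ satisfies $h(0)=0$, $h(1)=1$, $h(xy)=h(x)h(y)$ and $h(x\boxplus y)\subseteq h(x)\boxplus h(y)$. A topological hyperfield is a hyperfield with a topology in which $F\setminus\{0\}$ is open, multiplication is continuous, and inversion on $F^\times$ is continuous. Grassmannians. A strong Grassmann–Plücker (GP) function of rank $r$ on $E=\{1,\dots,n\}$ is a function $\varphi:E^r\to F$ with the following properties. - $\varphi$ is not identically $0$. - $\varphi$ is alternating. - For all $(i_1,\dots,i_{r+1})\in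 E^{r+1}$ and $(j_1,\dots,j_{r-1})\in E^{r-1}$: $$0\in\boxplus_{k=1}^{r+1}(-1)^k\varphi(i_1,\dots,\widehat{i_k},\dots,i_{r+1})\odot\varphi(i_k,j_1,\dots,j_{r-1}).$$ A weak GP function is a function $\varphi:E^r\to F$ with the following properties. - $\varphi$ is nonzero and alternating. - Its support $\{\{i_1,\dots,i_r\}:\varphi(i_1,\dots,i_r)\ne0\}$ is the set of bases of a matroid. - The relation holds whenever $|\{i\}\setminus\{j\}|=3$. $\operatorname{Gr}^s(r,F^n)$ and $\operatorname{Gr}^w(r,F^n)$ are the sets of classes of strong, resp. weak, GP functions modulo $\varphi\sim\alpha\varphi$, $\alpha\in F^\times$. For topological $F$ they have the subspace topology of $(F^{E^r}\setminus\{0\})/F^\times$, which carries the product and quotient topologies. Realization spaces. A morphism $f$ induces $\operatorname{Gr}^*(f):[\varphi]\mapsto[f\circ\varphi]$. For $M\in\operatorname{Gr}^*(r,F'^n)$, the realization space $\operatorname{Real}^*_F(M)$ is the preimage $\operatorname{Gr}^*(f)^{-1}(M)\subseteq\operatorname{Gr}^*(r,F^n)$ with the subspace topology. The notation $\operatorname{Real}^*_{F_i}(M)$ indicates which topology on $F$ is used. *)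

theory Defs
  imports "HOL-Analysis.Analysis" "HOL-Combinatorics.Permutations"
begin

text \<open>A hyperfield structure on the whole type 'a (the underlying set is UNIV).\<close>
record 'a hyperfield =
  hmul  :: "'a \<Rightarrow> 'a \<Rightarrow> 'a"
  hadd  :: "'a \<Rightarrow> 'a \<Rightarrow> 'a set"
  hone  :: 'a
  hzero :: 'a

definition set_hadd :: "('a, 'b) hyperfield_scheme \<Rightarrow> 'a set \<Rightarrow> 'a set \<Rightarrow> 'a set" where
  "set_hadd F A B = (\<Union>a\<in>A. \<Union>b\<in>B. hadd F a b)"

definition hneg :: "('a, 'b) hyperfield_scheme \<Rightarrow> 'a \<Rightarrow> 'a" where
  "hneg F x = (THE y. hzero F \<in> hadd F x y)"

definition hinv :: "('a, 'b) hyperfield_scheme \<Rightarrow> 'a \<Rightarrow> 'a" where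
  "hinv F x = (THE y. hmul F x y = hone F)"

definition is_hyperfield :: "('a, 'b) hyperfield_scheme \<Rightarrow> bool" where
  "is_hyperfield F \<longleftrightarrow>
     (\<forall>x y. hmul F x y = hmul F y x) \<and>
     (\<forall>x y z. hmul F (hmul F x y) z = hmul F x (hmul F y z)) \<and>
     (\<forall>x y. hadd F x y \<noteq> {}) \<and>
     (\<forall>x y. hadd F x y = hadd F y x) \<and>
     (\<forall>x y z. set_hadd F (hadd F x y) {z} = set_hadd F {x} (hadd F y z)) \<and>
     (\<forall>x. hadd F x (hzero F) = {x}) \<and>
     (\<forall>x. \<exists>!y. hzero F \<in> hadd F x y) \<and>
     (\<forall>x y z. x \<in> hadd F y z \<longleftrightarrow> z \<in> hadd F x (hneg F y)) \<and>
     hone F \<noteq> hzero F \<and>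
     (\<forall>x. hmul F (hone F) x = x) \<and>
     (\<forall>x y. x \<noteq> hzero F \<longrightarrow> y \<noteq> hzero F \<longrightarrow> hmul F x y \<noteq> hzero F) \<and>
     (\<forall>x. x \<noteq> hzero F \<longrightarrow> (\<exists>y. hmul F x y = hone F)) \<and>
     (\<forall>x. hmul F (hzero F) x = hzero F) \<and>
     (\<forall>x y z. hmul F x ` hadd F y z = hadd F (hmul F x y) (hmul F x z))"

definition hf_morphism ::
  "('a, 'c) hyperfield_scheme \<Rightarrow> ('b, 'd) hyperfield_scheme \<Rightarrow> ('a \<Rightarrow> 'b) \<Rightarrow> bool" where
  "hf_morphism F F' h \<longleftrightarrow>
     h (hzero F) = hzero F' \<and> h (hone F) = hone F' \<and>
     (\<forall>x y. h (hmul F x y) = hmul F' (h x) (h y)) \<and>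
     (\<forall>x y. h ` hadd F x y \<subseteq> hadd F' (h x) (h y))"

definition is_top_hyperfield :: "('a, 'b) hyperfield_scheme \<Rightarrow> 'a topology \<Rightarrow> bool" where
  "is_top_hyperfield F T \<longleftrightarrow>
     is_hyperfield F \<and> topspace T = UNIV \<and>
     openin T (- {hzero F}) \<and>
     continuous_map (prod_topology T T) T (\<lambda>(x, y). hmul F x y) \<and>
     continuous_map (subtopology T (- {hzero F})) (subtopology T (- {hzero F})) (hinv F)"

text \<open>E^r with E = {1..n}: lists of length r with entries in {1..n}.\<close>
definition Er :: "nat \<Rightarrow> nat \<Rightarrow> nat list set" where
  "Er n r = {xs. length xs = r \<and> set xs \<subseteq> {1..n}}"

fun hsum :: "('a, 'b) hyperfield_scheme \<Rightarrow> 'a list \<Rightarrow> 'a set" where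
  "hsum F [] = {hzero F}"
| "hsum F (a # as) = set_hadd F {a} (hsum F as)"

definition sgnpow :: "('a, 'b) hyperfield_scheme \<Rightarrow> nat \<Rightarrow> 'a" where
  "sgnpow F k = (if even k then hone F else hneg F (hone F))"

definition gp_nonzero :: "('a, 'b) hyperfield_scheme \<Rightarrow> nat \<Rightarrow> nat \<Rightarrow> (nat list \<Rightarrow> 'a) \<Rightarrow> bool" where
  "gp_nonzero F n r \<phi> \<longleftrightarrow> (\<exists>xs\<in>Er n r. \<phi> xs \<noteq> hzero F)"

definition gp_alternating :: "('a, 'b) hyperfield_scheme \<Rightarrow> nat \<Rightarrow> nat \<Rightarrow> (nat list \<Rightarrow> 'a) \<Rightarrow> bool" where
  "gp_alternating F n r \<phi> \<longleftrightarrow>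
     (\<forall>xs\<in>Er n r.
        (\<forall>\<sigma>. \<sigma> permutes {..<r} \<longrightarrow>
              \<phi> (map (\<lambda>i. xs ! \<sigma> i) [0..<r]) = hmul F (sgnpow F (if sign \<sigma> = 1 then 0 else 1)) (\<phi> xs)) \<and>
        (\<not> distinct xs \<longrightarrow> \<phi> xs = hzero F))"

text \<open>The Grassmann--Pluecker relation for (i_1..i_{r+1}) = I and (j_1..j_{r-1}) = J
  (k below is 0-based, so the sign is (-1)^(k+1)).\<close>
definition gp_rel ::
  "('a, 'b) hyperfield_scheme \<Rightarrow> nat \<Rightarrow> (nat list \<Rightarrow> 'a) \<Rightarrow> nat list \<Rightarrow> nat list \<Rightarrow> bool" where
  "gp_rel F r \<phi> I J \<longleftrightarrow>
     hzero F \<in> hsum F (map (\<lambda>k. hmul F (sgnpow F (Suc k))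
                              (hmul F (\<phi> (take k I @ drop (Suc k) I)) (\<phi> (I ! k # J))))
                         [0..<Suc r])"

definition matroid_bases :: "'a set \<Rightarrow> 'a set set \<Rightarrow> bool" where
  "matroid_bases E \<B> \<longleftrightarrow>
     \<B> \<noteq> {} \<and> (\<forall>B\<in>\<B>. B \<subseteq> E) \<and>
     (\<forall>B1\<in>\<B>. \<forall>B2\<in>\<B>. \<forall>x\<in>B1 - B2. \<exists>y\<in>B2 - B1. insert y (B1 - {x}) \<in> \<B>)"

definition gp_support :: "('a, 'b) hyperfield_scheme \<Rightarrow> nat \<Rightarrow> nat \<Rightarrow> (nat list \<Rightarrow> 'a) \<Rightarrow> nat set set" where
  "gp_support F n r \<phi> = {set xs | xs. xs \<in> Er n r \<and> \<phi> xs \<noteq> hzero F}"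

text \<open>E^{r-1} is empty for r = 0, hence the guard 0 < r.\<close>
definition strong_GP :: "('a, 'b) hyperfield_scheme \<Rightarrow> nat \<Rightarrow> nat \<Rightarrow> (nat list \<Rightarrow> 'a) \<Rightarrow> bool" where
  "strong_GP F n r \<phi> \<longleftrightarrow>
     gp_nonzero F n r \<phi> \<and> gp_alternating F n r \<phi> \<and>
     (\<forall>I\<in>Er n (Suc r). \<forall>J\<in>Er n (r - 1). 0 < r \<longrightarrow> gp_rel F r \<phi> I J)"

definition weak_GP :: "('a, 'b) hyperfield_scheme \<Rightarrow> nat \<Rightarrow> nat \<Rightarrow> (nat list \<Rightarrow> 'a) \<Rightarrow> bool" where
  "weak_GP F n r \<phi> \<longleftrightarrow>
     gp_nonzero F n r \<phi> \<and> gp_alternating F n r \<phi> \<and>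
     matroid_bases {1..n} (gp_support F n r \<phi>) \<and>
     (\<forall>I\<in>Er n (Suc r). \<forall>J\<in>Er n (r - 1).
        0 < r \<longrightarrow> card (set I - set J) = 3 \<longrightarrow> gp_rel F r \<phi> I J)"

datatype gp_kind = Strong | Weak

definition GP :: "('a, 'b) hyperfield_scheme \<Rightarrow> gp_kind \<Rightarrow> nat \<Rightarrow> nat \<Rightarrow> (nat list \<Rightarrow> 'a) \<Rightarrow> bool" where
  "GP F k n r \<phi> = (case k of Strong \<Rightarrow> strong_GP F n r \<phi> | Weak \<Rightarrow> weak_GP F n r \<phi>)"

definition quotient_topology :: "'a topology \<Rightarrow> ('a \<Rightarrow> 'b) \<Rightarrow> 'b topology" where
  "quotient_topology X q =
     topology (\<lambda>U. U \<subseteq> q ` topspace X \<and> openin X {x \<in> topspace X. q x \<in> U})"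

lemma istopology_quotient:
  "istopology (\<lambda>U. U \<subseteq> q ` topspace X \<and> openin X {x \<in> topspace X. q x \<in> U})"
proof -
  have i: "{x \<in> topspace X. q x \<in> S \<inter> T} =
        {x \<in> topspace X. q x \<in> S} \<inter> {x \<in> topspace X. q x \<in> T}" for S T by blast
  have u: "{x \<in> topspace X. q x \<in> \<Union>K} = (\<Union>U\<in>K. {x \<in> topspace X. q x \<in> U})" for K by blast
  show ?thesis
    unfolding istopology_def i u by (auto intro!: openin_Union)
qed

lemma openin_quotient_topology:
  "openin (quotient_topology X q) U \<longleftrightarrow>
     U \<subseteq> q ` topspace X \<and> openin X {x \<in> topspace X. q x \<in> U}"
  unfolding quotient_topology_def topology_inverse'[OF istopology_quotient] by (rule refl)

definition gp_space :: "('a, 'b) hyperfield_scheme \<Rightarrow> 'a topology \<Rightarrow> nat \<Rightarrow> nat \<Rightarrow> (nat list \<Rightarrow> 'a) topology" where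
  "gp_space F T n r =
     subtopology (product_topology (\<lambda>_. T) (Er n r))
       (topspace (product_topology (\<lambda>_. T) (Er n r)) - {restrict (\<lambda>_. hzero F) (Er n r)})"

definition gp_class :: "('a, 'b) hyperfield_scheme \<Rightarrow> nat \<Rightarrow> nat \<Rightarrow> (nat list \<Rightarrow> 'a) \<Rightarrow> (nat list \<Rightarrow> 'a) set" where
  "gp_class F n r \<phi> = {restrict (\<lambda>e. hmul F \<alpha> (\<phi> e)) (Er n r) | \<alpha>. \<alpha> \<noteq> hzero F}"

definition Gr_set :: "('a, 'b) hyperfield_scheme \<Rightarrow> gp_kind \<Rightarrow> nat \<Rightarrow> nat \<Rightarrow> (nat list \<Rightarrow> 'a) set set" where
  "Gr_set F k n r = gp_class F n r ` {\<phi> \<in> Er n r \<rightarrow>\<^sub>E UNIV. GP F k n r \<phi>}"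

definition Gr_top :: "('a, 'b) hyperfield_scheme \<Rightarrow> 'a topology \<Rightarrow> gp_kind \<Rightarrow> nat \<Rightarrow> nat \<Rightarrow> (nat list \<Rightarrow> 'a) set topology" where
  "Gr_top F T k n r =
     subtopology (quotient_topology (gp_space F T n r) (gp_class F n r)) (Gr_set F k n r)"

text \<open>Real^*_F(M): preimage of M under Gr^*(f) : [\<phi>] \<mapsto> [f \<circ> \<phi>].\<close>
definition Real_set ::
  "('a, 'c) hyperfield_scheme \<Rightarrow> ('b, 'd) hyperfield_scheme \<Rightarrow> ('a \<Rightarrow> 'b) \<Rightarrow> gp_kind \<Rightarrow> nat \<Rightarrow> nat
   \<Rightarrow> (nat list \<Rightarrow> 'b) set \<Rightarrow> (nat list \<Rightarrow> 'a) set set" where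
  "Real_set F F' f k n r M =
     gp_class F n r ` {\<phi> \<in> Er n r \<rightarrow>\<^sub>E UNIV. GP F k n r \<phi> \<and>
                       gp_class F' n r (restrict (f \<circ> \<phi>) (Er n r)) = M}"

definition Real_top ::
  "('a, 'c) hyperfield_scheme \<Rightarrow> 'a topology \<Rightarrow> ('b, 'd) hyperfield_scheme \<Rightarrow> ('a \<Rightarrow> 'b) \<Rightarrow> gp_kind
   \<Rightarrow> nat \<Rightarrow> nat \<Rightarrow> (nat list \<Rightarrow> 'b) set \<Rightarrow> (nat list \<Rightarrow> 'a) set topology" where
  "Real_top F T F' f k n r M = subtopology (Gr_top F T k n r) (Real_set F F' f k n r M)"

end

theory Submission
  imports Defs
begin

text \<open>
  Every class in \<open>Real(M)\<close> has a representative normalised to take the value \<open>1\<close> at a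
  fixed coordinate \<open>e\<^sub>0\<close> where a representative of \<open>M\<close> does not vanish, and after
  normalisation each coordinate lies in a fixed fibre of \<open>f\<close>. On such a product of fibres
  the two product topologies agree. Since normalisation is continuous for either
  topology (multiplication and inversion are continuous) and is constant on classes,
  an open set of the quotient for one topology can be pulled back to normalised
  representatives, transported to the other topology, and pushed down again.
\<close>

lemma openin_subtopology_quotient_transfer:
  assumes same_space: "topspace X2 = topspace X1"
    and agree: "subtopology X1 Y = subtopology X2 Y"
    and N: "openin X1 N" and cont: "continuous_map (subtopology X1 N) X1 \<nu>"
    and class_\<nu>: "\<And>x. x \<in> N \<Longrightarrow> q (\<nu> x) = q x"
    and saturated: "\<And>x y. x \<in> topspace X1 \<Longrightarrow> y \<in> N \<Longrightarrow> q x = q y \<Longrightarrow> x \<in> N \<and> \<nu> x = \<nu> y"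
    and rep: "\<And>c. c \<in> C \<Longrightarrow> \<exists>x\<in>N. q x = c \<and> \<nu> x \<in> Y"
    and U: "openin (subtopology (quotient_topology X2 q) C) U"
  shows "openin (subtopology (quotient_topology X1 q) C) U"
proof -
  obtain V where V: "openin (quotient_topology X2 q) V" and UV: "U = V \<inter> C"
    using U unfolding openin_subtopology by blast
  define W where "W = {x \<in> topspace X2. q x \<in> V}"
  have "openin X2 W" using V unfolding W_def openin_quotient_topology by blast
  hence "openin (subtopology X1 Y) (W \<inter> Y)"
    unfolding agree by (rule openin_subtopology_Int)
  then obtain O1 where O1: "openin X1 O1" and WO: "W \<inter> Y = O1 \<inter> Y"
    unfolding openin_subtopology by blast
  define S where "S = {x \<in> topspace (subtopology X1 N). \<nu> x \<in> O1}"
  have S: "openin X1 S"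
    unfolding S_def by (rule openin_trans_full[OF openin_continuous_map_preimage[OF cont O1] N])
  have SN: "S \<subseteq> N" unfolding S_def by auto
  have \<nu>_space: "\<nu> x \<in> topspace X1" if "x \<in> N" for x
    using continuous_map_image_subset_topspace[OF cont] openin_subset[OF N] that by auto
  have S_saturated: "{x \<in> topspace X1. q x \<in> q ` S} = S"
  proof -
    have "x \<in> S" if "x \<in> topspace X1" "s \<in> S" "q x = q s" for x s
      using saturated[OF that(1) _ that(3)] that(2) SN openin_subset[OF N] unfolding S_def by auto
    thus ?thesis using openin_subset[OF S] by blast
  qed
  have V': "openin (quotient_topology X1 q) (q ` S)"
    unfolding openin_quotient_topology S_saturated using S openin_subset[OF S] by blast
  have "c \<in> V \<longleftrightarrow> c \<in> q ` S" if c: "c \<in> C" for c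
  proof -
    obtain x where x: "x \<in> N" "q x = c" "\<nu> x \<in> Y" using rep[OF c] by blast
    have "c \<in> V \<longleftrightarrow> \<nu> x \<in> W"
      using x class_\<nu> \<nu>_space same_space unfolding W_def by auto
    also have "\<dots> \<longleftrightarrow> x \<in> S"
      using WO x \<nu>_space openin_subset[OF N] unfolding S_def by auto
    also have "\<dots> \<longleftrightarrow> c \<in> q ` S"
      using S_saturated x openin_subset[OF N] by auto
    finally show ?thesis .
  qed
  hence "U = q ` S \<inter> C" unfolding UV by blast
  thus ?thesis unfolding openin_subtopology using V' by blast
qed

context
  fixes F :: "('a, 'c) hyperfield_scheme"
  assumes HF: "is_hyperfield F"
begin

lemma hf_mult_commute: "hmul F x y = hmul F y x"
  using HF unfolding is_hyperfield_def by (elim conjE) metis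

lemma hf_mult_assoc: "hmul F (hmul F x y) z = hmul F x (hmul F y z)"
  using HF unfolding is_hyperfield_def by (elim conjE) metis

lemma hf_mult_one_left: "hmul F (hone F) x = x"
  using HF unfolding is_hyperfield_def by (elim conjE) metis

lemma hf_one_neq_zero: "hone F \<noteq> hzero F"
  using HF unfolding is_hyperfield_def by (elim conjE) metis

lemma hf_mult_zero_left: "hmul F (hzero F) x = hzero F"
  using HF unfolding is_hyperfield_def by (elim conjE) metis

lemma hf_mult_nonzero: "x \<noteq> hzero F \<Longrightarrow> y \<noteq> hzero F \<Longrightarrow> hmul F x y \<noteq> hzero F"
  using HF unfolding is_hyperfield_def by (elim conjE) metis

lemma hf_inverse_unique:
  assumes "hmul F x y = hone F"
  shows "hinv F x = y"
  unfolding hinv_def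
proof (rule the_equality)
  show "hmul F x y = hone F" by (fact assms)
  fix z assume "hmul F x z = hone F"
  thus "z = y" using assms hf_mult_one_left hf_mult_assoc hf_mult_commute by metis
qed

lemma hf_has_inverse: "x \<noteq> hzero F \<Longrightarrow> \<exists>y. hmul F x y = hone F"
  using HF unfolding is_hyperfield_def by (elim conjE) metis

lemma hf_mult_inverse: "x \<noteq> hzero F \<Longrightarrow> hmul F x (hinv F x) = hone F"
  using hf_has_inverse hf_inverse_unique by metis

lemma hf_inverse_mult_left: "x \<noteq> hzero F \<Longrightarrow> hmul F (hinv F x) x = hone F"
  using hf_mult_inverse hf_mult_commute by metis

lemma hf_inverse_nonzero: "x \<noteq> hzero F \<Longrightarrow> hinv F x \<noteq> hzero F"
  using hf_mult_inverse hf_mult_zero_left hf_mult_commute hf_one_neq_zero by metis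

lemma hf_inverse_mult:
  assumes "x \<noteq> hzero F" "y \<noteq> hzero F"
  shows "hinv F (hmul F x y) = hmul F (hinv F x) (hinv F y)"
proof (rule hf_inverse_unique)
  have "hmul F (hmul F x y) (hmul F (hinv F x) (hinv F y))
      = hmul F (hmul F x (hinv F x)) (hmul F y (hinv F y))"
    using hf_mult_assoc hf_mult_commute by metis
  thus "hmul F (hmul F x y) (hmul F (hinv F x) (hinv F y)) = hone F"
    using hf_mult_inverse assms hf_mult_one_left by simp
qed

end

lemma hf_morphism_inverse:
  assumes "is_hyperfield F" "is_hyperfield F'" "hf_morphism F F' f" "x \<noteq> hzero F"
  shows "hinv F' (f x) = f (hinv F x)"
  using hf_inverse_unique[OF assms(2)] hf_mult_inverse[OF assms(1,4)] assms(3)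
  unfolding hf_morphism_def by metis

lemma mem_gp_class:
  "x \<in> gp_class F n r \<phi> \<longleftrightarrow> (\<exists>\<alpha>. \<alpha> \<noteq> hzero F \<and> x = restrict (\<lambda>e. hmul F \<alpha> (\<phi> e)) (Er n r))"
  unfolding gp_class_def by blast

lemma gp_class_self:
  assumes "is_hyperfield F" "\<phi> \<in> Er n r \<rightarrow>\<^sub>E UNIV"
  shows "\<phi> \<in> gp_class F n r \<phi>"
proof -
  have "\<phi> = restrict (\<lambda>e. hmul F (hone F) (\<phi> e)) (Er n r)"
    using assms by (auto simp: hf_mult_one_left PiE_iff extensional_restrict)
  thus ?thesis unfolding mem_gp_class using hf_one_neq_zero[OF assms(1)] by blast
qed

lemma gp_class_eq_imp_scale:
  assumes "is_hyperfield F" "\<phi> \<in> Er n r \<rightarrow>\<^sub>E UNIV" "gp_class F n r \<phi> = gp_class F n r \<psi>"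
  shows "\<exists>\<alpha>. \<alpha> \<noteq> hzero F \<and> \<phi> = restrict (\<lambda>e. hmul F \<alpha> (\<psi> e)) (Er n r)"
proof -
  have "\<phi> \<in> gp_class F n r \<psi>" using gp_class_self[OF assms(1,2)] assms(3) by simp
  thus ?thesis unfolding mem_gp_class .
qed

lemma restrict_scale_scale:
  assumes "is_hyperfield F"
  shows "restrict (\<lambda>e. hmul F \<gamma> (restrict (\<lambda>e. hmul F \<alpha> (\<phi> e)) (Er n r) e)) (Er n r)
       = restrict (\<lambda>e. hmul F (hmul F \<gamma> \<alpha>) (\<phi> e)) (Er n r)"
  by (rule restrict_ext) (simp add: hf_mult_assoc[OF assms])

lemma gp_class_scale:
  assumes HF: "is_hyperfield F" and \<alpha>: "\<alpha> \<noteq> hzero F"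
  shows "gp_class F n r (restrict (\<lambda>e. hmul F \<alpha> (\<phi> e)) (Er n r)) = gp_class F n r \<phi>"
proof (intro set_eqI iffI)
  fix x assume "x \<in> gp_class F n r (restrict (\<lambda>e. hmul F \<alpha> (\<phi> e)) (Er n r))"
  then obtain \<gamma> where "\<gamma> \<noteq> hzero F" "x = restrict (\<lambda>e. hmul F (hmul F \<gamma> \<alpha>) (\<phi> e)) (Er n r)"
    unfolding mem_gp_class restrict_scale_scale[OF HF] by blast
  thus "x \<in> gp_class F n r \<phi>" unfolding mem_gp_class using hf_mult_nonzero[OF HF _ \<alpha>] by blast
next
  fix x assume "x \<in> gp_class F n r \<phi>"
  then obtain \<beta> where \<beta>: "\<beta> \<noteq> hzero F" and x: "x = restrict (\<lambda>e. hmul F \<beta> (\<phi> e)) (Er n r)"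
    unfolding mem_gp_class by blast
  have "hmul F (hmul F \<beta> (hinv F \<alpha>)) \<alpha> = \<beta>"
    using hf_inverse_mult_left[OF HF \<alpha>] hf_mult_assoc[OF HF] hf_mult_commute[OF HF]
      hf_mult_one_left[OF HF] by metis
  hence "x = restrict (\<lambda>e. hmul F (hmul F \<beta> (hinv F \<alpha>)) (restrict (\<lambda>e. hmul F \<alpha> (\<phi> e)) (Er n r) e)) (Er n r)"
    unfolding x restrict_scale_scale[OF HF] by simp
  moreover have "hmul F \<beta> (hinv F \<alpha>) \<noteq> hzero F"
    using hf_mult_nonzero[OF HF \<beta> hf_inverse_nonzero[OF HF \<alpha>]] .
  ultimately show "x \<in> gp_class F n r (restrict (\<lambda>e. hmul F \<alpha> (\<phi> e)) (Er n r))"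
    unfolding mem_gp_class by blast
qed

lemma GP_nonzero: "GP F k n r \<phi> \<Longrightarrow> gp_nonzero F n r \<phi>"
  unfolding GP_def strong_GP_def weak_GP_def by (cases k) auto

lemma topspace_gp_space:
  assumes "topspace T = UNIV"
  shows "topspace (gp_space F T n r) = (Er n r \<rightarrow>\<^sub>E UNIV) - {restrict (\<lambda>_. hzero F) (Er n r)}"
  unfolding gp_space_def using assms by auto

definition gp_normalize ::
  "('a, 'b) hyperfield_scheme \<Rightarrow> nat \<Rightarrow> nat \<Rightarrow> nat list \<Rightarrow> (nat list \<Rightarrow> 'a) \<Rightarrow> nat list \<Rightarrow> 'a" where
  "gp_normalize F n r e\<^sub>0 \<phi> = restrict (\<lambda>e. hmul F (hinv F (\<phi> e\<^sub>0)) (\<phi> e)) (Er n r)"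

lemma gp_normalize_at:
  "is_hyperfield F \<Longrightarrow> e\<^sub>0 \<in> Er n r \<Longrightarrow> \<phi> e\<^sub>0 \<noteq> hzero F \<Longrightarrow> gp_normalize F n r e\<^sub>0 \<phi> e\<^sub>0 = hone F"
  unfolding gp_normalize_def by (simp add: hf_inverse_mult_left)

lemma gp_class_gp_normalize:
  "is_hyperfield F \<Longrightarrow> \<phi> e\<^sub>0 \<noteq> hzero F \<Longrightarrow> gp_class F n r (gp_normalize F n r e\<^sub>0 \<phi>) = gp_class F n r \<phi>"
  unfolding gp_normalize_def by (simp add: gp_class_scale hf_inverse_nonzero)

lemma gp_normalize_scale:
  assumes HF: "is_hyperfield F" and "e\<^sub>0 \<in> Er n r" "\<alpha> \<noteq> hzero F" "\<phi> e\<^sub>0 \<noteq> hzero F"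
  shows "gp_normalize F n r e\<^sub>0 (restrict (\<lambda>e. hmul F \<alpha> (\<phi> e)) (Er n r)) = gp_normalize F n r e\<^sub>0 \<phi>"
proof -
  have "hmul F (hinv F (hmul F \<alpha> (\<phi> e\<^sub>0))) (hmul F \<alpha> x) = hmul F (hinv F (\<phi> e\<^sub>0)) x" for x
  proof -
    have "hmul F (hinv F (hmul F \<alpha> (\<phi> e\<^sub>0))) (hmul F \<alpha> x)
        = hmul F (hinv F (\<phi> e\<^sub>0)) (hmul F (hmul F (hinv F \<alpha>) \<alpha>) x)"
      using hf_inverse_mult[OF HF assms(3,4)] hf_mult_assoc[OF HF] hf_mult_commute[OF HF] by metis
    thus ?thesis using hf_inverse_mult_left[OF HF assms(3)] hf_mult_one_left[OF HF] by simp
  qed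
  thus ?thesis unfolding gp_normalize_def using assms(2) by (intro restrict_ext) simp
qed

lemma gp_normalize_morphism:
  assumes "is_hyperfield F" "is_hyperfield F'" "hf_morphism F F' f"
    and "e\<^sub>0 \<in> Er n r" "\<phi> e\<^sub>0 \<noteq> hzero F" "e \<in> Er n r"
  shows "f (gp_normalize F n r e\<^sub>0 \<phi> e) = gp_normalize F' n r e\<^sub>0 (restrict (f \<circ> \<phi>) (Er n r)) e"
  using assms hf_morphism_inverse[OF assms(1-3,5)] unfolding gp_normalize_def hf_morphism_def by simp

lemma openin_gp_space_nonzero_at:
  assumes "is_top_hyperfield F T" "e\<^sub>0 \<in> Er n r"
  shows "openin (gp_space F T n r) {\<phi> \<in> topspace (gp_space F T n r). \<phi> e\<^sub>0 \<noteq> hzero F}"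
proof -
  have "continuous_map (gp_space F T n r) T (\<lambda>\<phi>. \<phi> e\<^sub>0)"
    unfolding gp_space_def
    by (intro continuous_map_from_subtopology continuous_map_product_projection assms(2))
  from openin_continuous_map_preimage[OF this, of "- {hzero F}"] show ?thesis
    using assms(1) unfolding is_top_hyperfield_def by simp
qed

lemma continuous_map_gp_normalize:
  assumes top: "is_top_hyperfield F T" and e\<^sub>0: "e\<^sub>0 \<in> Er n r"
  defines "N \<equiv> {\<phi> \<in> topspace (gp_space F T n r). \<phi> e\<^sub>0 \<noteq> hzero F}"
  shows "continuous_map (subtopology (gp_space F T n r) N) (gp_space F T n r) (gp_normalize F n r e\<^sub>0)"
proof -
  have HF: "is_hyperfield F" and space: "topspace T = UNIV"
    and mul: "continuous_map (prod_topology T T) T (\<lambda>(x, y). hmul F x y)"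
    and inv: "continuous_map (subtopology T (- {hzero F})) (subtopology T (- {hzero F})) (hinv F)"
    using top unfolding is_top_hyperfield_def by auto
  have coord: "continuous_map (subtopology (gp_space F T n r) N) T (\<lambda>\<phi>. \<phi> e)" if "e \<in> Er n r" for e
    unfolding gp_space_def
    by (intro continuous_map_from_subtopology continuous_map_product_projection that)
  have "continuous_map (subtopology (gp_space F T n r) N) (subtopology T (- {hzero F})) (\<lambda>\<phi>. \<phi> e\<^sub>0)"
    using coord[OF e\<^sub>0] unfolding continuous_map_in_subtopology N_def by auto
  hence "continuous_map (subtopology (gp_space F T n r) N) T (hinv F \<circ> (\<lambda>\<phi>. \<phi> e\<^sub>0))"
    using continuous_map_compose[OF _ inv] continuous_map_into_fulltopology by blast
  hence "continuous_map (subtopology (gp_space F T n r) N) T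
           ((\<lambda>(x, y). hmul F x y) \<circ> (\<lambda>\<phi>. (hinv F (\<phi> e\<^sub>0), \<phi> e)))" if "e \<in> Er n r" for e
    using continuous_map_compose[OF continuous_map_pairedI mul] coord[OF that]
    by (simp add: o_def)
  hence "continuous_map (subtopology (gp_space F T n r) N) (product_topology (\<lambda>_. T) (Er n r))
           (gp_normalize F n r e\<^sub>0)"
    unfolding continuous_map_componentwise gp_normalize_def by (auto simp: o_def)
  moreover have "gp_normalize F n r e\<^sub>0 \<phi> \<noteq> restrict (\<lambda>_. hzero F) (Er n r)" if "\<phi> \<in> N" for \<phi>
  proof
    assume "gp_normalize F n r e\<^sub>0 \<phi> = restrict (\<lambda>_. hzero F) (Er n r)"
    hence "gp_normalize F n r e\<^sub>0 \<phi> e\<^sub>0 = hzero F" using e\<^sub>0 by simp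
    thus False using gp_normalize_at[OF HF e\<^sub>0] that hf_one_neq_zero[OF HF] unfolding N_def by simp
  qed
  moreover have "gp_normalize F n r e\<^sub>0 \<phi> \<in> Er n r \<rightarrow>\<^sub>E UNIV" for \<phi>
    unfolding gp_normalize_def by simp
  ultimately show ?thesis
    unfolding gp_space_def continuous_map_in_subtopology by (auto simp: space)
qed

lemma subtopology_gp_space_fibres:
  assumes "\<And>a. subtopology T1 (f -` {a}) = subtopology T2 (f -` {a})"
  shows "subtopology (gp_space F T1 n r) (\<Pi>\<^sub>E e\<in>Er n r. f -` {b e})
       = subtopology (gp_space F T2 n r) (\<Pi>\<^sub>E e\<in>Er n r. f -` {b e})"
proof -
  have "subtopology (gp_space F T n r) (\<Pi>\<^sub>E e\<in>Er n r. f -` {b e})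
      = subtopology (product_topology (\<lambda>e. subtopology T (f -` {b e})) (Er n r))
          (topspace (product_topology (\<lambda>_. T) (Er n r)) - {restrict (\<lambda>_. hzero F) (Er n r)})" for T
    unfolding gp_space_def subtopology_subtopology subtopology_product_topology[symmetric]
    by (simp add: Int_commute)
  moreover have "topspace T1 = topspace T2"
  proof -
    have "x \<in> topspace T1 \<longleftrightarrow> x \<in> topspace T2" for x
      using arg_cong[OF assms[of "f x"], of topspace] by auto
    thus ?thesis by blast
  qed
  ultimately show ?thesis using assms by simp
qed

lemma gp_normalize_realization:
  assumes HF: "is_hyperfield F" and HF': "is_hyperfield F'" and hom: "hf_morphism F F' f"
    and e\<^sub>0: "e\<^sub>0 \<in> Er n r" and \<psi>: "\<psi> e\<^sub>0 \<noteq> hzero F'"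
    and \<phi>: "gp_class F' n r (restrict (f \<circ> \<phi>) (Er n r)) = gp_class F' n r \<psi>"
  shows "\<phi> e\<^sub>0 \<noteq> hzero F"
    and "gp_normalize F n r e\<^sub>0 \<phi> \<in> (\<Pi>\<^sub>E e\<in>Er n r. f -` {gp_normalize F' n r e\<^sub>0 \<psi> e})"
proof -
  obtain \<beta> where \<beta>: "\<beta> \<noteq> hzero F'"
    and f\<phi>: "restrict (f \<circ> \<phi>) (Er n r) = restrict (\<lambda>e. hmul F' \<beta> (\<psi> e)) (Er n r)"
    using gp_class_eq_imp_scale[OF HF' _ \<phi>] by auto
  have "f (\<phi> e\<^sub>0) = hmul F' \<beta> (\<psi> e\<^sub>0)" using fun_cong[OF f\<phi>, of e\<^sub>0] e\<^sub>0 by simp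
  hence "f (\<phi> e\<^sub>0) \<noteq> hzero F'" using hf_mult_nonzero[OF HF' \<beta> \<psi>] by simp
  thus nz: "\<phi> e\<^sub>0 \<noteq> hzero F" using hom unfolding hf_morphism_def by auto
  have "f (gp_normalize F n r e\<^sub>0 \<phi> e) = gp_normalize F' n r e\<^sub>0 \<psi> e" if "e \<in> Er n r" for e
    using gp_normalize_morphism[where \<phi> = \<phi>, OF HF HF' hom e\<^sub>0 nz that]
      gp_normalize_scale[where \<phi> = \<psi>, OF HF' e\<^sub>0 \<beta> \<psi>] f\<phi> by simp
  thus "gp_normalize F n r e\<^sub>0 \<phi> \<in> (\<Pi>\<^sub>E e\<in>Er n r. f -` {gp_normalize F' n r e\<^sub>0 \<psi> e})"
    by (auto simp: gp_normalize_def)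
qed

lemma openin_Real_top_transfer:
  fixes F :: "'a hyperfield" and F' :: "'b hyperfield"
  assumes HF: "is_hyperfield F" and HF': "is_hyperfield F'" and hom: "hf_morphism F F' f"
    and top1: "is_top_hyperfield F T1" and top2: "is_top_hyperfield F T2"
    and fibres: "\<And>a. subtopology T1 (f -` {a}) = subtopology T2 (f -` {a})"
    and M: "M \<in> Gr_set F' k n r"
    and U: "openin (Real_top F T2 F' f k n r M) U"
  shows "openin (Real_top F T1 F' f k n r M) U"
proof -
  obtain \<psi> where \<psi>: "GP F' k n r \<psi>" and M_eq: "M = gp_class F' n r \<psi>"
    using M unfolding Gr_set_def by blast
  obtain e\<^sub>0 where e\<^sub>0: "e\<^sub>0 \<in> Er n r" and \<psi>e\<^sub>0: "\<psi> e\<^sub>0 \<noteq> hzero F'"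
    using GP_nonzero[OF \<psi>] unfolding gp_nonzero_def by blast
  define X1 where "X1 = gp_space F T1 n r"
  define N where "N = {\<phi> \<in> topspace X1. \<phi> e\<^sub>0 \<noteq> hzero F}"
  define Y where "Y = (\<Pi>\<^sub>E e\<in>Er n r. f -` {gp_normalize F' n r e\<^sub>0 \<psi> e})"
  have space: "topspace T1 = UNIV" "topspace T2 = UNIV"
    using top1 top2 unfolding is_top_hyperfield_def by auto
  have topspace_X1: "topspace X1 = (Er n r \<rightarrow>\<^sub>E UNIV) - {restrict (\<lambda>_. hzero F) (Er n r)}"
    unfolding X1_def using topspace_gp_space[OF space(1)] .
  have "openin (subtopology (quotient_topology X1 (gp_class F n r)) (Gr_set F k n r \<inter> Real_set F F' f k n r M)) U"
  proof (rule openin_subtopology_quotient_transfer)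
    show "topspace (gp_space F T2 n r) = topspace X1"
      unfolding topspace_X1 using topspace_gp_space[OF space(2)] .
    show "subtopology X1 Y = subtopology (gp_space F T2 n r) Y"
      unfolding X1_def Y_def using subtopology_gp_space_fibres[OF fibres] .
    show "openin X1 N"
      unfolding X1_def N_def using openin_gp_space_nonzero_at[OF top1 e\<^sub>0] .
    show "continuous_map (subtopology X1 N) X1 (gp_normalize F n r e\<^sub>0)"
      unfolding X1_def N_def using continuous_map_gp_normalize[OF top1 e\<^sub>0] .
    show "gp_class F n r (gp_normalize F n r e\<^sub>0 \<phi>) = gp_class F n r \<phi>" if "\<phi> \<in> N" for \<phi>
      using gp_class_gp_normalize[OF HF] that unfolding N_def by blast
    show "\<phi> \<in> N \<and> gp_normalize F n r e\<^sub>0 \<phi> = gp_normalize F n r e\<^sub>0 \<xi>"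
      if \<phi>_space: "\<phi> \<in> topspace X1" and \<xi>: "\<xi> \<in> N"
        and same_class: "gp_class F n r \<phi> = gp_class F n r \<xi>" for \<phi> \<xi>
    proof -
      obtain \<alpha> where \<alpha>: "\<alpha> \<noteq> hzero F" and \<phi>: "\<phi> = restrict (\<lambda>e. hmul F \<alpha> (\<xi> e)) (Er n r)"
        using gp_class_eq_imp_scale[OF HF _ same_class] \<phi>_space topspace_X1 by auto
      have "\<xi> e\<^sub>0 \<noteq> hzero F" using \<xi> unfolding N_def by blast
      thus ?thesis
        using \<phi>_space \<xi> hf_mult_nonzero[OF HF \<alpha>] gp_normalize_scale[OF HF e\<^sub>0 \<alpha>] e\<^sub>0
        unfolding \<phi> N_def by auto
    qed
    show "\<exists>\<phi>\<in>N. gp_class F n r \<phi> = c \<and> gp_normalize F n r e\<^sub>0 \<phi> \<in> Y"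
      if c: "c \<in> Gr_set F k n r \<inter> Real_set F F' f k n r M" for c
    proof -
      obtain \<phi> where \<phi>: "\<phi> \<in> Er n r \<rightarrow>\<^sub>E UNIV" "gp_class F n r \<phi> = c"
        and real: "gp_class F' n r (restrict (f \<circ> \<phi>) (Er n r)) = gp_class F' n r \<psi>"
        using c unfolding Real_set_def M_eq by blast
      note normal = gp_normalize_realization[OF HF HF' hom e\<^sub>0 \<psi>e\<^sub>0 real]
      have "\<phi> \<in> N" using \<phi>(1) normal(1) e\<^sub>0 unfolding N_def topspace_X1 by auto
      thus ?thesis using \<phi>(2) normal(2) unfolding Y_def by blast
    qed
    show "openin (subtopology (quotient_topology (gp_space F T2 n r) (gp_class F n r))
        (Gr_set F k n r \<inter> Real_set F F' f k n r M)) U"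
      using U unfolding Real_top_def Gr_top_def subtopology_subtopology .
  qed
  thus ?thesis unfolding Real_top_def Gr_top_def subtopology_subtopology X1_def .
qed

theorem lemma5p1:
  fixes F :: "'a hyperfield" and F' :: "'b hyperfield" and f :: "'a \<Rightarrow> 'b"
    and T1 T2 :: "'a topology" and k :: gp_kind and n r :: nat
    and M :: "(nat list \<Rightarrow> 'b) set"
  assumes "is_hyperfield F" and "is_hyperfield F'" and "hf_morphism F F' f"
    and "is_top_hyperfield F T1" and "is_top_hyperfield F T2"
    and "\<forall>a. homeomorphic_map (subtopology T1 (f -` {a})) (subtopology T2 (f -` {a})) id"
    and "M \<in> Gr_set F' k n r"
  shows "homeomorphic_map (Real_top F T1 F' f k n r M) (Real_top F T2 F' f k n r M) id"
proof -
  have fibres: "subtopology T1 (f -` {a}) = subtopology T2 (f -` {a})" for a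
    using assms(6) homeomorphic_map_id by metis
  have "Real_top F T1 F' f k n r M = Real_top F T2 F' f k n r M"
  proof (rule topology_eq[THEN iffD2], intro allI iffI)
    fix U
    assume "openin (Real_top F T1 F' f k n r M) U"
    thus "openin (Real_top F T2 F' f k n r M) U"
      by (rule openin_Real_top_transfer[OF assms(1-3,5,4) fibres[symmetric] assms(7)])
  next
    fix U
    assume "openin (Real_top F T2 F' f k n r M) U"
    thus "openin (Real_top F T1 F' f k n r M) U"
      by (rule openin_Real_top_transfer[OF assms(1-5) fibres assms(7)])
  qed
  thus ?thesis by simp
qed

end
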